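(* Assume the setting below. Then for all $s\in\mathbb{R}$ and $\Delta t\ge0$, $$R^*_{M_i}(s+\Delta t)-R^*_{M_i}(s)\le \Big[\Delta t-\frac{\beta_{ST}(\Delta t)}{C}\Big]_\uparrow^+\cdot idSl_{M_i}+c_{M_i}^{max}-c_{M_i}^{min},$$ i.e. $\sigma_{M_i}(t)=[t-\beta_{ST}(t)/C]_\uparrow^+\,idSl_{M_i}+c_{M_i}^{max}-c_{M_i}^{min}$ is a shaping curve for the output of class $M_i$ at the port (non-preemption mode).
   Context: Fix an output port with physical link rate $C>0$. Its gate control list (GCL) is periodic with period $p>0$ and contains $N\ge 1$ scheduled-traffic (ST) windows per period. Window $k\in\{0,\dots,N-1\}$ is the interval $[o_k,o_k+L_k)$, where $0\le o_0<o_1<\dots<o_{N-1}<p$, $L_k\ge 0$, $o_k+L_k\le o_{k+1}$ for $k<N-1$ and $o_{N-1}+L_{N-1}\le o_0+p$. Indices are extended to all integers periodically: $o_{k+N}=o_k+p$, $L_{k+N}=L_k$. Relative offsets are $o_{j,i}=o_j-o_i$. Let $S=\bigcup_{k\in\mathbb Z}[o_k,o_k+L_k)$ and for $s\le t$ let $\Delta t_{ST}(s,t)$ be the Lebesgue measure of $S\cap[s,t]$. Let $g_i=o_i-(o_{i-1}+L_{i-1})$ be the idle gap before window $i$. Define $\beta_{TDMA}(x,L)=C\max\{\lfloor x/p\rfloor L,\ x-\lceil x/p\rceil(p-L)\}$ and $\beta_{ST}(t)=\min_{0\le i\le N-1}\sum_{j=i}^{i+N-1}\beta_{TDMA}\big(t+p-L_j-g_i-o_{j,i},\,L_j\big)$.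 For a function $f$, $[f]_\uparrow^+(t)=\max\{0,\sup_{0\le u\le t}f(u)\}$. AVB class $M_i$ has idle slope $idSl_{M_i}\in(0,C)$ and send slope $sdSl_{M_i}=idSl_{M_i}-C$; $R^*_{M_i}(t)$ is the cumulative number of bits of class $M_i$ transmitted by time $t$ and $c_{M_i}(t)$ its credit. Assumptions: for every interval $[s,s+\Delta t]$, the interval is partitioned into measurable sets $T^+$ (where $c_{M_i}$ increases at rate $idSl_{M_i}$), $T^-$ (exactly the times when a class-$M_i$ frame is being transmitted, where $R^*_{M_i}$ increases at rate $C$ and $c_{M_i}$ changes at rate $sdSl_{M_i}$), and $T^0$ (where $c_{M_i}$ does not increase: it is frozen or reset downward); $R^*_{M_i}$ is constant outside $T^-$; $S\cap[s,s+\Delta t]\subseteq T^0$ (AVB gates closed in ST windows). Constants $c_{M_i}^{min}\le c_{M_i}^{max}$ satisfy $c_{M_i}^{min}\le c_{M_i}(t)\le c_{M_i}^{max}$ for all $t$. *)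

theory Defs
  imports "HOL-Analysis.Analysis"
begin

text \<open>GCL data: off, L :: int => real are the (periodically extended) window
offsets and lengths; N windows per period p; link rate C.\<close>

definition ST_set :: "(int \<Rightarrow> real) \<Rightarrow> (int \<Rightarrow> real) \<Rightarrow> real set" where
  "ST_set off L = (\<Union>k::int. {off k ..< off k + L k})"

definition gap :: "(int \<Rightarrow> real) \<Rightarrow> (int \<Rightarrow> real) \<Rightarrow> int \<Rightarrow> real" where
  "gap off L i = off i - (off (i - 1) + L (i - 1))"

definition beta_TDMA :: "real \<Rightarrow> real \<Rightarrow> real \<Rightarrow> real \<Rightarrow> real" where
  "beta_TDMA C p x Lw =
     C * max (of_int \<lfloor>x / p\<rfloor> * Lw) (x - of_int \<lceil>x / p\<rceil> * (p - Lw))"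

definition beta_ST :: "real \<Rightarrow> real \<Rightarrow> nat \<Rightarrow> (int \<Rightarrow> real) \<Rightarrow> (int \<Rightarrow> real) \<Rightarrow> real \<Rightarrow> real" where
  "beta_ST C p N off L t =
     Min ((\<lambda>i::int. \<Sum>j = i..i + int N - 1.
             beta_TDMA C p (t + p - L j - gap off L i - (off j - off i)) (L j)) ` {0..int N - 1})"

definition up_plus :: "(real \<Rightarrow> real) \<Rightarrow> real \<Rightarrow> real" where
  "up_plus f t = max 0 (SUP u\<in>{0..t}. f u)"

end

theory Submission
  imports Defs
begin

text \<open>While a class-M frame is sent the credit falls at rate \<open>C - idSl\<close>; otherwise it rises at
most at rate \<open>idSl\<close>, and it never rises inside an ST window. As the credit stays in
\<open>[cmin, cmax]\<close>, the output over an interval is at most \<open>idSl\<close> times its non-ST time plus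
\<open>cmax - cmin\<close>. For an interval starting in the idle gap before window \<open>i\<close>, adding up the
periodic copies of the windows \<open>i, \<dots>, i + N - 1\<close> shows that its ST time is at least
\<open>beta_ST \<Delta>t / C\<close>. An interval starting inside a window carries no more output than the interval of
the same length starting at that window's end, since nothing of class M is sent in the rest of the
window.\<close>

lemma lmeasurable_Ico [simp]: "{l..<u::real} \<in> lmeasurable"
  by (rule fmeasurableI2[of "{l..u}"]) auto

lemma measure_lebesgue_Ico: "measure lebesgue {l..<u::real} = max 0 (u - l)"
  by (cases "l \<le> u") auto

lemma measure_disjoint_Un3:
  assumes "A \<in> fmeasurable M" "B \<in> fmeasurable M" "C \<in> fmeasurable M"
    and "A \<inter> B = {}" "A \<inter> C = {}" "B \<inter> C = {}"
  shows "measure M (A \<union> B \<union> C) = measure M A + measure M B + measure M C"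
proof -
  have "C - (A \<union> B) = C" "B - A = B" using assms(4-6) by auto
  then show ?thesis using assms(1-3) by (simp add: measure_Un2 fmeasurable.Un)
qed

lemma sum_measure_le_of_disjoint_family:
  assumes "finite S" "disjoint_family_on A S"
    and "\<And>s. s \<in> S \<Longrightarrow> A s \<in> fmeasurable M" "\<And>s. s \<in> S \<Longrightarrow> A s \<subseteq> B"
    and "B \<in> fmeasurable M"
  shows "(\<Sum>s\<in>S. measure M (A s)) \<le> measure M B"
proof -
  have "(\<Sum>s\<in>S. measure M (A s)) = measure M (\<Union>s\<in>S. A s)"
  proof (rule measure_finite_Union[symmetric])
    show "A ` S \<subseteq> sets M" using assms(3) fmeasurableD by blast
    show "emeasure M (A s) \<noteq> \<infinity>" if "s \<in> S" for s
      using fmeasurableD2[OF assms(3)[OF that]] by simp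
  qed (fact assms)+
  also have "\<dots> \<le> measure M B"
  proof (rule measure_mono_fmeasurable)
    show "(\<Union>s\<in>S. A s) \<subseteq> B" using assms(4) by blast
    show "(\<Union>s\<in>S. A s) \<in> sets M" by (intro sets.finite_UN assms(1) fmeasurableD assms(3))
  qed (fact assms)
  finally show ?thesis .
qed

lemma shift_by_multiple:
  fixes f :: "int \<Rightarrow> 'a::ring_1"
  assumes step: "\<And>k. f (k + n) = f k + d"
  shows "f (k + q * n) = f k + of_int q * d"
proof (induction q rule: int_induct[where k = 0])
  case base
  then show ?case by simp
next
  case (step1 q)
  have "f (k + (q + 1) * n) = f ((k + q * n) + n)" by (simp add: algebra_simps)
  also have "\<dots> = f k + of_int q * d + d" by (simp only: step step1.IH)
  finally show ?case by (simp add: algebra_simps)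
next
  case (step2 q)
  have "f (k + q * n) = f ((k + (q - 1) * n) + n)" by (simp add: algebra_simps)
  also have "\<dots> = f (k + (q - 1) * n) + d" by (rule step)
  finally show ?case using step2.IH by (simp add: algebra_simps)
qed

lemma int_crossing:
  fixes f :: "int \<Rightarrow> 'a::linorder"
  assumes "f a \<le> s" "s < f b" "a < b"
  shows "\<exists>k. f (k - 1) \<le> s \<and> s < f k"
  using assms(3,2)
proof (induction b rule: int_gr_induct)
  case base
  then show ?case using assms(1) by (intro exI[of _ "a + 1"]) simp
next
  case (step b)
  then show ?case by (cases "s < f b") (auto intro: exI[of _ "b + 1"])
qed

lemma residue_index_inj:
  fixes i j j' a a' n :: int
  assumes "i \<le> j" "j < i + n" "i \<le> j'" "j' < i + n"
    and "j + a * n = j' + a' * n"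
  shows "j = j' \<and> a = a'"
proof -
  have "j - j' = (a' - a) * n" using assms(5) by (simp add: algebra_simps)
  moreover have "0 < n" using assms(1,2) by simp
  ultimately have "\<bar>a' - a\<bar> * n = \<bar>j - j'\<bar>" by (simp add: abs_mult)
  also have "\<dots> < 1 * n" using assms(1-4) by simp
  finally have "a = a'" using \<open>0 < n\<close> by (simp add: mult_less_cancel_right)
  then show ?thesis using assms(5) by simp
qed

text \<open>The time covered, inside an interval of length \<open>x\<close> starting at the end of a window, by
that window repeated with period \<open>p\<close>.\<close>

definition window_time :: "real \<Rightarrow> real \<Rightarrow> real \<Rightarrow> real" where
  "window_time p x l = of_int \<lfloor>x / p\<rfloor> * l + max 0 (x - of_int \<lfloor>x / p\<rfloor> * p - (p - l))"

lemma sum_measure_periodic_window: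
  fixes a l p b :: real
  defines "x \<equiv> b + p - (a + l)"
  assumes p: "0 < p" and l: "0 \<le> l" and x: "0 \<le> x"
  shows "(\<Sum>n\<le>nat \<lfloor>x / p\<rfloor>. measure lebesgue ({a + n * p ..< a + l + n * p} \<inter> {..<b}))
           = window_time p x l"
proof -
  define m where "m = nat \<lfloor>x / p\<rfloor>"
  have m: "of_int \<lfloor>x / p\<rfloor> = real m" using x p unfolding m_def by simp
  have "real m \<le> x / p" "x / p < real m + 1" using m by linarith+
  then have m_le: "real m * p \<le> x" and m_gt: "x < real m * p + p"
    using p by (simp_all add: field_simps)
  have Ico_Int: "{u..<v} \<inter> {..<b} = {u..<min v b}" for u v :: real by auto
  have full: "measure lebesgue ({a + n * p ..< a + l + n * p} \<inter> {..<b}) = l" if "n < m" for n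
  proof -
    have "real (Suc n) * p \<le> real m * p" using that p by (intro mult_right_mono) auto
    then have "a + l + n * p \<le> b" using m_le unfolding x_def by (simp add: algebra_simps)
    then show ?thesis using l by (simp add: Ico_Int measure_lebesgue_Ico)
  qed
  have last: "measure lebesgue ({a + m * p ..< a + l + m * p} \<inter> {..<b})
               = max 0 (x - real m * p - (p - l))"
    using m_gt unfolding x_def by (simp add: Ico_Int measure_lebesgue_Ico)
  have "(\<Sum>n\<le>m. measure lebesgue ({a + n * p ..< a + l + n * p} \<inter> {..<b}))
        = (\<Sum>n<m. measure lebesgue ({a + n * p ..< a + l + n * p} \<inter> {..<b}))
          + max 0 (x - real m * p - (p - l))"
    by (simp only: lessThan_Suc_atMost[symmetric] sum.lessThan_Suc last)
  also have "\<dots> = window_time p x l" using full by (simp add: window_time_def m)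
  finally show ?thesis unfolding m_def .
qed

lemma beta_TDMA_le_window_time:
  assumes "0 < p" "0 \<le> C"
  shows "beta_TDMA C p x l \<le> C * window_time p x l"
proof -
  define f where "f = \<lfloor>x / p\<rfloor>"
  have "x - of_int \<lceil>x / p\<rceil> * (p - l) \<le> window_time p x l"
  proof (cases "\<lceil>x / p\<rceil> = f")
    case True
    then have "x / p = of_int f" unfolding f_def by linarith
    then have "x = of_int f * p" using assms(1) by (simp add: field_simps)
    then show ?thesis unfolding window_time_def f_def[symmetric] True by (simp add: algebra_simps)
  next
    case False
    then have "\<lceil>x / p\<rceil> = f + 1" unfolding f_def by linarith
    then show ?thesis unfolding window_time_def f_def[symmetric] by (simp add: algebra_simps)
  qed
  moreover have "of_int f * l \<le> window_time p x l" unfolding window_time_def f_def by simp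
  ultimately show ?thesis unfolding beta_TDMA_def f_def using assms(2) by (simp add: mult_left_mono)
qed

lemma beta_TDMA_nonneg:
  assumes "0 < p" "0 \<le> C" "0 \<le> l" "0 \<le> x"
  shows "0 \<le> beta_TDMA C p x l"
proof -
  have "0 \<le> of_int \<lfloor>x / p\<rfloor> * l" using assms by simp
  then show ?thesis unfolding beta_TDMA_def using assms(2) by simp
qed

locale gate_control_list =
  fixes p :: real and N :: nat and off L :: "int \<Rightarrow> real"
  assumes p_pos: "p > 0" and N_pos: "N \<ge> 1"
    and L_nonneg: "\<And>k. 0 \<le> k \<Longrightarrow> k \<le> int N - 1 \<Longrightarrow> L k \<ge> 0"
    and no_overlap: "\<And>k. 0 \<le> k \<Longrightarrow> k < int N - 1 \<Longrightarrow> off k + L k \<le> off (k + 1)"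
    and no_overlap_last: "off (int N - 1) + L (int N - 1) \<le> off 0 + p"
    and o_per: "\<And>k. off (k + int N) = off k + p"
    and L_per: "\<And>k. L (k + int N) = L k"
begin

definition window_end :: "int \<Rightarrow> real" where
  "window_end k = off k + L k"

definition window :: "int \<Rightarrow> real set" where
  "window k = {off k ..< window_end k}"

lemma window_lmeasurable [simp]: "window k \<in> lmeasurable"
  unfolding window_def by simp

lemma off_shift: "off (k + q * int N) = off k + of_int q * p"
  by (rule shift_by_multiple) (rule o_per)

lemma L_shift: "L (k + q * int N) = L k"
  using shift_by_multiple[of L "int N" 0] L_per by simp

lemma window_end_shift: "window_end (k + q * int N) = window_end k + of_int q * p"
  unfolding window_end_def off_shift L_shift by simp

lemma window_precedes_next: "0 \<le> L k \<and> window_end k \<le> off (k + 1)"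
proof -
  define r where "r = k mod int N"
  define q where "q = k div int N"
  have k: "k = r + q * int N" unfolding r_def q_def by simp
  have r: "0 \<le> r" "r \<le> int N - 1" unfolding r_def using N_pos by auto
  have "0 \<le> L r \<and> window_end r \<le> off (r + 1)"
  proof (cases "r < int N - 1")
    case True
    then show ?thesis using r L_nonneg no_overlap unfolding window_end_def by auto
  next
    case False
    then have "r = int N - 1" using r by simp
    moreover have "off (int N - 1 + 1) = off 0 + p" using o_per[of 0] by simp
    ultimately show ?thesis using L_nonneg[of r] r no_overlap_last unfolding window_end_def by auto
  qed
  moreover have "off (k + 1) = off (r + 1) + of_int q * p"
    using off_shift[of "r + 1" q] k by (simp add: algebra_simps)
  ultimately show ?thesis using k window_end_shift[of r q] L_shift[of r q] by auto
qed

lemma L_nonneg_all: "0 \<le> L k"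
  using window_precedes_next by blast

lemma off_le_window_end: "off k \<le> window_end k"
  using L_nonneg_all unfolding window_end_def by simp

lemma off_mono: "k \<le> k' \<Longrightarrow> off k \<le> off k'"
proof (induction k' rule: int_ge_induct)
  case (step i)
  then show ?case using off_le_window_end[of i] window_precedes_next[of i] by linarith
qed simp

lemma window_end_le_off: "k < k' \<Longrightarrow> window_end k \<le> off k'"
  using window_precedes_next[of k] off_mono[of "k + 1" k'] by simp

lemma window_end_mono: "k \<le> k' \<Longrightarrow> window_end k \<le> window_end k'"
  using window_end_le_off[of k k'] off_le_window_end[of k'] by (cases "k = k'") auto

lemma ST_set_eq: "ST_set off L = (\<Union>k. window k)"
  unfolding ST_set_def window_def window_end_def ..

lemma ST_set_lebesgue: "ST_set off L \<in> sets lebesgue"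
  unfolding ST_set_eq window_def by auto

lemma ST_set_Int_lmeasurable: "ST_set off L \<inter> {a..b} \<in> lmeasurable"
  by (rule fmeasurableI2[OF lmeasurable_interval(1) Int_lower2])
    (intro sets.Int ST_set_lebesgue fmeasurableD lmeasurable_interval)

lemma windows_disjoint: "k \<noteq> k' \<Longrightarrow> window k \<inter> window k' = {}"
  using window_end_le_off[of k k'] window_end_le_off[of k' k]
  unfolding window_def by (cases "k < k'") auto

lemma window_end_crossing: "\<exists>k. window_end (k - 1) \<le> s \<and> s < window_end k"
proof -
  define qa where "qa = \<lfloor>(s - window_end 0) / p\<rfloor> - 1"
  define qb where "qb = \<lceil>(s - window_end 0) / p\<rceil> + 1"
  have "of_int qa \<le> (s - window_end 0) / p" "(s - window_end 0) / p < of_int qb"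
    unfolding qa_def qb_def by linarith+
  then have "window_end (qa * int N) \<le> s" "s < window_end (qb * int N)"
    using window_end_shift[of 0 qa] window_end_shift[of 0 qb] p_pos by (simp_all add: field_simps)
  moreover have "qa < qb"
    unfolding qa_def qb_def using floor_le_ceiling[of "(s - window_end 0) / p"] by linarith
  then have "qa * int N < qb * int N" using N_pos by simp
  ultimately show ?thesis by (rule int_crossing)
qed

lemma window_end_within_period: "j \<le> i + int N - 1 \<Longrightarrow> window_end j \<le> window_end (i - 1) + p"
  using window_end_mono[of j "i - 1 + 1 * int N"] window_end_shift[of "i - 1" 1] by simp

lemma window_copies_disjoint:
  assumes "i \<le> j" "j < i + int N" "i \<le> j'" "j' < i + int N" "(j, n) \<noteq> (j', n')"
  shows "window (j + int n * int N) \<inter> window (j' + int n' * int N) = {}"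
  using residue_index_inj[OF assms(1-4), of "int n" "int n'"] assms(5) windows_disjoint by auto

lemma window_copy_subset:
  assumes "window_end (i - 1) \<le> a" "a \<le> off i" "i \<le> j"
  shows "window (j + int n * int N) \<inter> {..<window_end (i - 1) + \<Delta>t} \<subseteq> ST_set off L \<inter> {a..a + \<Delta>t}"
proof -
  have "0 \<le> int n * int N" by simp
  then have "off i \<le> off (j + int n * int N)" using assms(3) by (intro off_mono) linarith
  then show ?thesis using assms(1,2) unfolding ST_set_eq window_def by auto
qed

lemma window_time_le_ST_time:
  assumes gap: "window_end (i - 1) \<le> a" "a \<le> off i" and "0 \<le> \<Delta>t"
  shows "(\<Sum>j = i..i + int N - 1. window_time p (\<Delta>t + p + window_end (i - 1) - window_end j) (L j))
           \<le> measure lebesgue (ST_set off L \<inter> {a..a + \<Delta>t})"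
proof -
  define b where "b = window_end (i - 1) + \<Delta>t"
  define x where "x j = \<Delta>t + p + window_end (i - 1) - window_end j" for j
  define J where "J = {i..i + int N - 1}"
  define copy where "copy = (\<lambda>(j, n). window (j + int n * int N) \<inter> {..<b})"
  define S where "S = Sigma J (\<lambda>j. {..nat \<lfloor>x j / p\<rfloor>})"
  have copy_eq: "copy (j, n) = {off j + n * p ..< off j + L j + n * p} \<inter> {..<b}" for j n
    unfolding copy_def window_def window_end_shift off_shift by (simp add: window_end_def)
  have per_window: "window_time p (x j) (L j) = (\<Sum>n\<le>nat \<lfloor>x j / p\<rfloor>. measure lebesgue (copy (j, n)))"
    if "j \<in> J" for j
  proof -
    have "0 \<le> x j"
      using window_end_within_period[of j i] that \<open>0 \<le> \<Delta>t\<close> unfolding x_def J_def by simp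
    moreover have "x j = b + p - (off j + L j)" unfolding x_def b_def window_end_def by simp
    ultimately show ?thesis
      using sum_measure_periodic_window[of p "L j" b "off j"] p_pos L_nonneg_all[of j]
      unfolding copy_eq by simp
  qed
  have finite_S: "finite S" unfolding S_def J_def by simp
  have copy_lmeasurable: "copy s \<in> lmeasurable" for s
    unfolding copy_def by (cases s) (simp add: fmeasurable_Int_fmeasurable)
  have copy_subset: "copy s \<subseteq> ST_set off L \<inter> {a..a + \<Delta>t}" if s: "s \<in> S" for s
  proof -
    obtain j n where "s = (j, n)" "i \<le> j" using s unfolding S_def J_def by auto
    then show ?thesis using window_copy_subset[OF gap, of j n \<Delta>t] unfolding copy_def b_def by simp
  qed
  have disjoint: "disjoint_family_on copy S"
    unfolding disjoint_family_on_def
  proof (intro ballI impI)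
    fix s s' assume "s \<in> S" "s' \<in> S" "s \<noteq> s'"
    then obtain j n j' n' where "s = (j, n)" "s' = (j', n')" "j \<in> J" "j' \<in> J"
      unfolding S_def by auto
    then show "copy s \<inter> copy s' = {}"
      using window_copies_disjoint[of i j j' n n'] \<open>s \<noteq> s'\<close> unfolding copy_def J_def by auto
  qed
  have "(\<Sum>j\<in>J. window_time p (x j) (L j))
        = (\<Sum>j\<in>J. \<Sum>n\<le>nat \<lfloor>x j / p\<rfloor>. measure lebesgue (copy (j, n)))"
    by (rule sum.cong) (simp_all add: per_window)
  also have "\<dots> = (\<Sum>s\<in>S. measure lebesgue (copy s))"
    unfolding S_def J_def by (subst sum.Sigma) (auto simp: case_prod_beta')
  also have "\<dots> \<le> measure lebesgue (ST_set off L \<inter> {a..a + \<Delta>t})"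
    by (rule sum_measure_le_of_disjoint_family[OF finite_S disjoint copy_lmeasurable copy_subset
          ST_set_Int_lmeasurable])
  finally show ?thesis unfolding x_def J_def .
qed

lemma gap_offset_eq:
  "t + p - L j - gap off L i - (off j - off i) = t + p + window_end (i - 1) - window_end j"
  unfolding gap_def window_end_def by simp

lemma beta_ST_le_sum:
  "beta_ST C p N off L t
     \<le> (\<Sum>j = i..i + int N - 1. beta_TDMA C p (t + p + window_end (i - 1) - window_end j) (L j))"
proof -
  define r where "r = i mod int N"
  define q where "q = i div int N"
  have i: "i = r + q * int N" unfolding r_def q_def by simp
  have "beta_ST C p N off L t
        \<le> (\<Sum>j = r..r + int N - 1. beta_TDMA C p (t + p + window_end (r - 1) - window_end j) (L j))"
    unfolding beta_ST_def gap_offset_eq by (rule Min_le) (use N_pos in \<open>auto simp: r_def\<close>)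
  also have "\<dots> = (\<Sum>j = i..i + int N - 1. beta_TDMA C p (t + p + window_end (i - 1) - window_end j) (L j))"
  proof (rule sum.reindex_bij_witness[of _ "\<lambda>j. j - q * int N" "\<lambda>j. j + q * int N"])
    fix j
    show "beta_TDMA C p (t + p + window_end (i - 1) - window_end (j + q * int N)) (L (j + q * int N))
          = beta_TDMA C p (t + p + window_end (r - 1) - window_end j) (L j)"
      using window_end_shift[of "r - 1" q] window_end_shift[of j q] L_shift[of j q] i
      by (simp add: algebra_simps)
  qed (use i in auto)
  finally show ?thesis .
qed

lemma beta_ST_nonneg:
  assumes "0 \<le> C" "0 \<le> t"
  shows "0 \<le> beta_ST C p N off L t"
proof -
  have "beta_ST C p N off L t \<in> (\<lambda>i. \<Sum>j = i..i + int N - 1.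
          beta_TDMA C p (t + p + window_end (i - 1) - window_end j) (L j)) ` {0..int N - 1}"
    unfolding beta_ST_def gap_offset_eq by (rule Min_in) (use N_pos in auto)
  then obtain i where "beta_ST C p N off L t
      = (\<Sum>j = i..i + int N - 1. beta_TDMA C p (t + p + window_end (i - 1) - window_end j) (L j))"
    by blast
  also have "\<dots> \<ge> 0"
  proof (rule sum_nonneg)
    fix j assume "j \<in> {i..i + int N - 1}"
    then have "window_end j \<le> window_end (i - 1) + p" by (intro window_end_within_period) simp
    then show "0 \<le> beta_TDMA C p (t + p + window_end (i - 1) - window_end j) (L j)"
      using assms p_pos L_nonneg_all by (intro beta_TDMA_nonneg) auto
  qed
  finally show ?thesis .
qed

lemma beta_ST_le_ST_time:
  assumes "0 < C" "window_end (i - 1) \<le> a" "a \<le> off i" "0 \<le> \<Delta>t"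
  shows "beta_ST C p N off L \<Delta>t \<le> C * measure lebesgue (ST_set off L \<inter> {a..a + \<Delta>t})"
proof -
  let ?x = "\<lambda>j. \<Delta>t + p + window_end (i - 1) - window_end j"
  have "beta_ST C p N off L \<Delta>t \<le> (\<Sum>j = i..i + int N - 1. beta_TDMA C p (?x j) (L j))"
    by (rule beta_ST_le_sum)
  also have "\<dots> \<le> (\<Sum>j = i..i + int N - 1. C * window_time p (?x j) (L j))"
    using assms(1) p_pos by (intro sum_mono beta_TDMA_le_window_time) auto
  also have "\<dots> \<le> C * measure lebesgue (ST_set off L \<inter> {a..a + \<Delta>t})"
    using window_time_le_ST_time[OF assms(2-4)] assms(1)
    by (simp add: sum_distrib_left[symmetric])
  finally show ?thesis .
qed

end

lemma up_plus_ge: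
  assumes "0 \<le> t" and bounded: "\<And>u. 0 \<le> u \<Longrightarrow> u \<le> t \<Longrightarrow> f u \<le> B"
  shows "f t \<le> up_plus f t"
proof -
  have "bdd_above (f ` {0..t})" using bounded by (intro bdd_aboveI2) auto
  then have "f t \<le> (SUP u\<in>{0..t}. f u)" using assms(1) by (intro cSUP_upper) auto
  then show ?thesis unfolding up_plus_def by simp
qed

locale cbs_port = gate_control_list +
  fixes C idSl cmin cmax :: real and R c :: "real \<Rightarrow> real"
  assumes C_pos: "C > 0" and idSl_pos: "0 < idSl"
    and partition: "\<And>s' d. d \<ge> 0 \<Longrightarrow>
       \<exists>Tp Tm T0.
          Tp \<in> sets lebesgue \<and> Tm \<in> sets lebesgue \<and> T0 \<in> sets lebesgue \<and>
          Tp \<union> Tm \<union> T0 = {s'..s'+d} \<and>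
          Tp \<inter> Tm = {} \<and> Tp \<inter> T0 = {} \<and> Tm \<inter> T0 = {} \<and>
          ST_set off L \<inter> {s'..s'+d} \<subseteq> T0 \<and>
          (\<forall>u v. s' \<le> u \<longrightarrow> u \<le> v \<longrightarrow> v \<le> s' + d \<longrightarrow>
              R v - R u = C * measure lebesgue (Tm \<inter> {u..v}) \<and>
              c v - c u \<le> idSl * measure lebesgue (Tp \<inter> {u..v})
                         + (idSl - C) * measure lebesgue (Tm \<inter> {u..v}))"
    and c_bounds: "\<And>t. cmin \<le> c t \<and> c t \<le> cmax"
begin

lemma partitionE:
  assumes "0 \<le> d"
  obtains Tp Tm T0 where
    "Tp \<in> sets lebesgue" "Tm \<in> sets lebesgue" "T0 \<in> sets lebesgue"
    "Tp \<union> Tm \<union> T0 = {s..s + d}" "Tp \<inter> Tm = {}" "Tp \<inter> T0 = {}" "Tm \<inter> T0 = {}"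
    "ST_set off L \<inter> {s..s + d} \<subseteq> T0"
    "\<And>u v. s \<le> u \<Longrightarrow> u \<le> v \<Longrightarrow> v \<le> s + d \<Longrightarrow> R v - R u = C * measure lebesgue (Tm \<inter> {u..v})"
    "\<And>u v. s \<le> u \<Longrightarrow> u \<le> v \<Longrightarrow> v \<le> s + d \<Longrightarrow>
       c v - c u \<le> idSl * measure lebesgue (Tp \<inter> {u..v}) + (idSl - C) * measure lebesgue (Tm \<inter> {u..v})"
  using partition[OF assms, of s]
proof (elim exE conjE)
  fix Tp Tm T0
  assume sets: "Tp \<in> sets lebesgue" "Tm \<in> sets lebesgue" "T0 \<in> sets lebesgue"
    and parts: "Tp \<union> Tm \<union> T0 = {s..s + d}" "Tp \<inter> Tm = {}" "Tp \<inter> T0 = {}" "Tm \<inter> T0 = {}"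
    and ST: "ST_set off L \<inter> {s..s + d} \<subseteq> T0"
    and rates: "\<forall>u v. s \<le> u \<longrightarrow> u \<le> v \<longrightarrow> v \<le> s + d \<longrightarrow>
              R v - R u = C * measure lebesgue (Tm \<inter> {u..v}) \<and>
              c v - c u \<le> idSl * measure lebesgue (Tp \<inter> {u..v})
                         + (idSl - C) * measure lebesgue (Tm \<inter> {u..v})"
  show thesis
    by (rule that[OF sets parts ST]) (use rates in simp_all)
qed

lemma R_mono: "u \<le> v \<Longrightarrow> R u \<le> R v"
proof -
  assume "u \<le> v"
  then have "0 \<le> v - u" by simp
  then show "R u \<le> R v"
  proof (rule partitionE[where s = u])
    fix Tp Tm T0
    assume "\<And>u' v'. u \<le> u' \<Longrightarrow> u' \<le> v' \<Longrightarrow> v' \<le> u + (v - u) \<Longrightarrow>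
      R v' - R u' = C * measure lebesgue (Tm \<inter> {u'..v'})"
    then have "R v - R u = C * measure lebesgue (Tm \<inter> {u..v})" using \<open>u \<le> v\<close> by simp
    moreover have "0 \<le> C * measure lebesgue (Tm \<inter> {u..v})" using C_pos by simp
    ultimately show "R u \<le> R v" by linarith
  qed
qed

lemma output_le_idle_slope_outside_ST:
  assumes "0 \<le> \<Delta>t"
  shows "R (a + \<Delta>t) - R a
           \<le> idSl * (\<Delta>t - measure lebesgue (ST_set off L \<inter> {a..a + \<Delta>t})) + cmax - cmin"
proof (rule partitionE[OF assms, of a])
  fix Tp Tm T0
  assume sets: "Tp \<in> sets lebesgue" "Tm \<in> sets lebesgue" "T0 \<in> sets lebesgue"
    and parts: "Tp \<union> Tm \<union> T0 = {a..a + \<Delta>t}" "Tp \<inter> Tm = {}" "Tp \<inter> T0 = {}" "Tm \<inter> T0 = {}"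
    and ST: "ST_set off L \<inter> {a..a + \<Delta>t} \<subseteq> T0"
    and R_rate: "\<And>u v. a \<le> u \<Longrightarrow> u \<le> v \<Longrightarrow> v \<le> a + \<Delta>t \<Longrightarrow>
      R v - R u = C * measure lebesgue (Tm \<inter> {u..v})"
    and c_rate: "\<And>u v. a \<le> u \<Longrightarrow> u \<le> v \<Longrightarrow> v \<le> a + \<Delta>t \<Longrightarrow>
      c v - c u \<le> idSl * measure lebesgue (Tp \<inter> {u..v}) + (idSl - C) * measure lebesgue (Tm \<inter> {u..v})"
  have sub: "Tp \<subseteq> {a..a + \<Delta>t}" "Tm \<subseteq> {a..a + \<Delta>t}" "T0 \<subseteq> {a..a + \<Delta>t}"
    using parts(1) by auto
  have lmeas: "Tp \<in> lmeasurable" "Tm \<in> lmeasurable" "T0 \<in> lmeasurable"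
    using sets sub by (auto intro: fmeasurableI2[of "{a..a + \<Delta>t}"])
  have total: "measure lebesgue Tp + measure lebesgue Tm + measure lebesgue T0 = \<Delta>t"
    using measure_disjoint_Un3[OF lmeas parts(2-4)] parts(1) assms by simp
  have ST_time: "measure lebesgue (ST_set off L \<inter> {a..a + \<Delta>t}) \<le> measure lebesgue T0"
    by (rule measure_mono_fmeasurable[OF ST fmeasurableD[OF ST_set_Int_lmeasurable] lmeas(3)])
  have "R (a + \<Delta>t) - R a = C * measure lebesgue Tm"
    and "c (a + \<Delta>t) - c a \<le> idSl * measure lebesgue Tp + (idSl - C) * measure lebesgue Tm"
    using R_rate[of a "a + \<Delta>t"] c_rate[of a "a + \<Delta>t"] sub assms by (simp_all add: Int_absorb2)
  moreover have "cmin - cmax \<le> c (a + \<Delta>t) - c a"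
    using c_bounds[of a] c_bounds[of "a + \<Delta>t"] by simp
  moreover have "idSl * (measure lebesgue Tp + measure lebesgue Tm + measure lebesgue T0) = idSl * \<Delta>t"
    using total by simp
  ultimately have "R (a + \<Delta>t) - R a \<le> idSl * (\<Delta>t - measure lebesgue T0) + cmax - cmin"
    unfolding left_diff_distrib right_diff_distrib distrib_left by linarith
  also have "\<dots> \<le> idSl * (\<Delta>t - measure lebesgue (ST_set off L \<inter> {a..a + \<Delta>t})) + cmax - cmin"
    using ST_time idSl_pos by (simp add: mult_left_mono)
  finally show ?thesis .
qed

lemma R_constant_on_window: "off k \<le> s \<Longrightarrow> s \<le> window_end k \<Longrightarrow> R (window_end k) = R s"
proof -
  assume s: "off k \<le> s" "s \<le> window_end k"
  then have "0 \<le> window_end k - s" by simp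
  then show "R (window_end k) = R s"
  proof (rule partitionE[where s = s])
    fix Tp Tm T0
    assume Tm: "Tm \<in> sets lebesgue" "Tm \<inter> T0 = {}"
      and ST: "ST_set off L \<inter> {s..s + (window_end k - s)} \<subseteq> T0"
      and R_rate: "\<And>u v. s \<le> u \<Longrightarrow> u \<le> v \<Longrightarrow> v \<le> s + (window_end k - s) \<Longrightarrow>
        R v - R u = C * measure lebesgue (Tm \<inter> {u..v})"
    have sub: "Tm \<inter> {s..window_end k} \<subseteq> {window_end k}"
    proof
      fix y assume y: "y \<in> Tm \<inter> {s..window_end k}"
      show "y \<in> {window_end k}"
      proof (rule ccontr)
        assume "y \<notin> {window_end k}"
        then have "y \<in> window k" using y s(1) unfolding window_def by auto
        then have "y \<in> ST_set off L" unfolding ST_set_eq by blast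
        then have "y \<in> T0" using ST y by auto
        then show False using Tm(2) y by blast
      qed
    qed
    have "{window_end k} \<in> null_sets lebesgue" by simp
    moreover have "Tm \<inter> {s..window_end k} \<in> sets lebesgue"
      by (intro sets.Int Tm(1) fmeasurableD lmeasurable_interval)
    ultimately have "Tm \<inter> {s..window_end k} \<in> null_sets lebesgue"
      using sub by (rule null_sets_subset)
    then have "measure lebesgue (Tm \<inter> {s..window_end k}) = 0" by (rule measure_eq_0_null_sets)
    then show ?thesis using R_rate[of s "window_end k"] s(2) by simp
  qed
qed

lemma output_bound_from_gap:
  assumes "window_end (i - 1) \<le> a" "a \<le> off i" "0 \<le> \<Delta>t"
  shows "R (a + \<Delta>t) - R a \<le> idSl * (\<Delta>t - beta_ST C p N off L \<Delta>t / C) + cmax - cmin"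
proof -
  have "beta_ST C p N off L \<Delta>t / C \<le> measure lebesgue (ST_set off L \<inter> {a..a + \<Delta>t})"
    using beta_ST_le_ST_time[OF C_pos assms] C_pos by (simp add: divide_le_eq mult.commute)
  then have "idSl * (\<Delta>t - measure lebesgue (ST_set off L \<inter> {a..a + \<Delta>t}))
             \<le> idSl * (\<Delta>t - beta_ST C p N off L \<Delta>t / C)"
    using idSl_pos by (simp add: mult_left_mono)
  then show ?thesis using output_le_idle_slope_outside_ST[OF assms(3), of a] by linarith
qed

lemma output_bound:
  assumes "0 \<le> \<Delta>t"
  shows "R (s + \<Delta>t) - R s \<le> idSl * (\<Delta>t - beta_ST C p N off L \<Delta>t / C) + cmax - cmin"
proof -
  obtain k where k: "window_end (k - 1) \<le> s" "s < window_end k"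
    using window_end_crossing by blast
  show ?thesis
  proof (cases "s \<le> off k")
    case True
    then show ?thesis using output_bound_from_gap k(1) assms by blast
  next
    case False
    have "R (s + \<Delta>t) - R s \<le> R (window_end k + \<Delta>t) - R (window_end k)"
      using R_mono[of "s + \<Delta>t" "window_end k + \<Delta>t"] R_constant_on_window[of k s] k False by simp
    also have "\<dots> \<le> idSl * (\<Delta>t - beta_ST C p N off L \<Delta>t / C) + cmax - cmin"
      using window_end_le_off[of k "k + 1"] assms by (intro output_bound_from_gap[of "k + 1"]) auto
    finally show ?thesis .
  qed
qed

end

theorem theorem5:
  fixes C p idSl cmin cmax :: real
    and N :: nat
    and off L :: "int \<Rightarrow> real"
    and R c :: "real \<Rightarrow> real"
    and s \<Delta>t :: real
  assumes C_pos: "C > 0" and p_pos: "p > 0" and N_pos: "N \<ge> 1"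
    and o0: "0 \<le> off 0"
    and o_mono: "\<And>k. 0 \<le> k \<Longrightarrow> k < int N - 1 \<Longrightarrow> off k < off (k + 1)"
    and o_last: "off (int N - 1) < p"
    and L_nonneg: "\<And>k. 0 \<le> k \<Longrightarrow> k \<le> int N - 1 \<Longrightarrow> L k \<ge> 0"
    and no_overlap: "\<And>k. 0 \<le> k \<Longrightarrow> k < int N - 1 \<Longrightarrow> off k + L k \<le> off (k + 1)"
    and no_overlap_last: "off (int N - 1) + L (int N - 1) \<le> off 0 + p"
    and o_per: "\<And>k. off (k + int N) = off k + p"
    and L_per: "\<And>k. L (k + int N) = L k"
    and idSl: "0 < idSl" "idSl < C"
    and partition: "\<And>s' d. d \<ge> 0 \<Longrightarrow>
       \<exists>Tp Tm T0.
          Tp \<in> sets lebesgue \<and> Tm \<in> sets lebesgue \<and> T0 \<in> sets lebesgue \<and>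
          Tp \<union> Tm \<union> T0 = {s'..s'+d} \<and>
          Tp \<inter> Tm = {} \<and> Tp \<inter> T0 = {} \<and> Tm \<inter> T0 = {} \<and>
          ST_set off L \<inter> {s'..s'+d} \<subseteq> T0 \<and>
          (\<forall>u v. s' \<le> u \<longrightarrow> u \<le> v \<longrightarrow> v \<le> s' + d \<longrightarrow>
              R v - R u = C * measure lebesgue (Tm \<inter> {u..v}) \<and>
              c v - c u \<le> idSl * measure lebesgue (Tp \<inter> {u..v})
                         + (idSl - C) * measure lebesgue (Tm \<inter> {u..v}))"
    and c_bounds: "\<And>t. cmin \<le> c t \<and> c t \<le> cmax"
    and cmin_le: "cmin \<le> cmax"
    and dt: "\<Delta>t \<ge> 0"
  shows "R (s + \<Delta>t) - R s
           \<le> up_plus (\<lambda>u. u - beta_ST C p N off L u / C) \<Delta>t * idSl + cmax - cmin"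
proof -
  interpret cbs_port p N off L C idSl cmin cmax R c
    by unfold_locales
      (fact p_pos N_pos L_nonneg no_overlap no_overlap_last o_per L_per C_pos idSl(1) partition
        c_bounds)+
  have "\<Delta>t - beta_ST C p N off L \<Delta>t / C \<le> up_plus (\<lambda>u. u - beta_ST C p N off L u / C) \<Delta>t"
  proof (rule up_plus_ge[OF dt])
    fix u :: real
    assume "0 \<le> u" "u \<le> \<Delta>t"
    moreover have "0 \<le> beta_ST C p N off L u / C" using beta_ST_nonneg[of C u] C_pos \<open>0 \<le> u\<close> by simp
    ultimately show "u - beta_ST C p N off L u / C \<le> \<Delta>t" by linarith
  qed
  then have "idSl * (\<Delta>t - beta_ST C p N off L \<Delta>t / C)
               \<le> up_plus (\<lambda>u. u - beta_ST C p N off L u / C) \<Delta>t * idSl"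
    using idSl(1) by (simp add: mult_left_mono mult.commute)
  then show ?thesis using output_bound[OF dt, of s] by linarith
qed

end
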